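(* For an unweighted cycle $\mathcal{C}_N$ ($N\geq3$), one has $h(1)=0$, \[ \overline{h}(1)=\begin{cases}\frac{N-1}{N},& N\text{ odd},\\ 1,& N\text{ even},\end{cases} \qquad h(k)=1-\overline{h}(k)=\frac{1}{\lfloor N/k\rfloor}\quad\text{for }2\leq k\leq N. \]
   Context: The unweighted cycle $\mathcal{C}_N$ has vertices $v_1,\ldots,v_N$ and edges exactly $\{v_i,v_{i+1}\}$ (indices mod $N$), each of weight $1$; $w_{uv}=0$ for non-edges, so every degree $d_u=2$. $|E(A,B)|:=\sum_{u\in A,v\in B}w_{uv}$, $\mathrm{vol}(A)=\sum_{u\in A}d_u$, $\overline{A}$ the complement. For nonempty $S$, $\phi(S)=|E(S,\overline{S})|/\mathrm{vol}(S)$; $h(k):=\min\max_{1\leq i\leq k}\phi(S_i)$ over all collections of $k$ nonempty pairwise disjoint vertex subsets. For disjoint $V_1,V_2$ with $V_1\cup V_2\neq\emptyset$, $\overline{\phi}(V_1,V_2)=2|E(V_1,V_2)|/\mathrm{vol}(V_1\cup V_2)$; $\overline{h}(k):=\max\min_{1\leq i\leq k}\overline{\phi}(V_{2i-1},V_{2i})$ over all collections of $k$ pairs $(V_1,V_2),\ldots,(V_{2k-1},V_{2k})$ of pairwise disjoint vertex subsets with $V_{2i-1}\cup V_{2i}\neq\emptyset$ for each $i$. *)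

theory Defs
  imports Complex_Main
begin

text \<open>The unweighted cycle C_N with vertex set {0..<N} (vertex v_i is i-1);
  edges are {i, (i+1) mod N}, each of weight 1.\<close>

definition cyc_V :: "nat \<Rightarrow> nat set" where
  "cyc_V N = {..<N}"

definition cyc_w :: "nat \<Rightarrow> nat \<Rightarrow> nat \<Rightarrow> real" where
  "cyc_w N u v = (if u < N \<and> v < N \<and> u \<noteq> v \<and> (v = (u + 1) mod N \<or> u = (v + 1) mod N)
                  then 1 else 0)"

definition cyc_deg :: "nat \<Rightarrow> nat \<Rightarrow> real" where
  "cyc_deg N u = (\<Sum>v\<in>cyc_V N. cyc_w N u v)"

definition cyc_E :: "nat \<Rightarrow> nat set \<Rightarrow> nat set \<Rightarrow> real" where
  "cyc_E N A B = (\<Sum>u\<in>A. \<Sum>v\<in>B. cyc_w N u v)"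

definition cyc_vol :: "nat \<Rightarrow> nat set \<Rightarrow> real" where
  "cyc_vol N A = (\<Sum>u\<in>A. cyc_deg N u)"

definition cyc_phi :: "nat \<Rightarrow> nat set \<Rightarrow> real" where
  "cyc_phi N S = cyc_E N S (cyc_V N - S) / cyc_vol N S"

definition cyc_phibar :: "nat \<Rightarrow> nat set \<Rightarrow> nat set \<Rightarrow> real" where
  "cyc_phibar N A B = 2 * cyc_E N A B / cyc_vol N (A \<union> B)"

definition cyc_h :: "nat \<Rightarrow> nat \<Rightarrow> real" where
  "cyc_h N k = Inf {Max ((\<lambda>i. cyc_phi N (S i)) ` {..<k}) | S.
      (\<forall>i<k. S i \<noteq> {} \<and> S i \<subseteq> cyc_V N) \<and>
      (\<forall>i<k. \<forall>j<k. i \<noteq> j \<longrightarrow> S i \<inter> S j = {})}"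

definition cyc_hbar :: "nat \<Rightarrow> nat \<Rightarrow> real" where
  "cyc_hbar N k = Sup {Min ((\<lambda>i. cyc_phibar N (A i) (B i)) ` {..<k}) | A B.
      (\<forall>i<k. A i \<subseteq> cyc_V N \<and> B i \<subseteq> cyc_V N \<and> A i \<union> B i \<noteq> {} \<and> A i \<inter> B i = {}) \<and>
      (\<forall>i<k. \<forall>j<k. i \<noteq> j \<longrightarrow> (A i \<union> B i) \<inter> (A j \<union> B j) = {})}"

end

theory Submission
  imports Defs
begin

text \<open>Every vertex has degree 2, so \<open>vol S = 2 |S|\<close>, and a nonempty proper vertex set of the
  cycle has at least two boundary edges, one leaving it and one entering it. Hence
  \<open>\<phi>(S) \<ge> 1/|S|\<close>; and since
  \<open>vol (A \<union> B) = |E(A, A)| + |E(B, B)| + 2 |E(A, B)| + |E(A \<union> B, complement)|\<close>, also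
  \<open>\<phi>bar(A, B) \<le> 1 - 1/|A \<union> B|\<close>, where for \<open>A \<union> B\<close> the whole odd cycle the two
  missing edges come from a monochromatic edge instead of the boundary. Among \<open>k\<close> disjoint
  sets one has at most \<open>\<lfloor>N/k\<rfloor>\<close> vertices, and \<open>k\<close> disjoint arcs of length
  \<open>\<lfloor>N/k\<rfloor>\<close>, alternately two-coloured, attain both bounds.\<close>

lemma cyc_w_sym: "cyc_w N u v = cyc_w N v u"
  unfolding cyc_w_def by auto

lemma cyc_w_nonneg: "cyc_w N u v \<ge> 0"
  unfolding cyc_w_def by auto

lemma cyc_E_commute: "cyc_E N A B = cyc_E N B A"
  unfolding cyc_E_def by (subst sum.swap) (simp add: cyc_w_sym)

lemma cyc_E_nonneg: "cyc_E N A B \<ge> 0"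
  unfolding cyc_E_def by (intro sum_nonneg) (simp add: cyc_w_nonneg)

lemma cyc_phi_nonneg: "cyc_phi N S \<ge> 0"
  unfolding cyc_phi_def cyc_vol_def cyc_deg_def
  by (intro divide_nonneg_nonneg cyc_E_nonneg sum_nonneg) (simp add: cyc_w_nonneg)

lemma cyc_E_Un_left:
  "A \<inter> B = {} \<Longrightarrow> finite A \<Longrightarrow> finite B \<Longrightarrow> cyc_E N (A \<union> B) C = cyc_E N A C + cyc_E N B C"
  unfolding cyc_E_def by (simp add: sum.union_disjoint)

lemma cyc_E_Un_right:
  "A \<inter> B = {} \<Longrightarrow> finite A \<Longrightarrow> finite B \<Longrightarrow> cyc_E N C (A \<union> B) = cyc_E N C A + cyc_E N C B"
  unfolding cyc_E_def by (simp add: sum.union_disjoint sum.distrib)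

lemma Suc_mod_eq: "v < (N::nat) \<Longrightarrow> Suc v mod N = (if Suc v = N then 0 else Suc v)"
  by auto

lemma cyc_w_succ: "N \<ge> 3 \<Longrightarrow> u < N \<Longrightarrow> cyc_w N u (Suc u mod N) = 1"
  unfolding cyc_w_def by (auto simp: Suc_mod_eq)

lemma cyc_w_eq:
  assumes "N \<ge> 3" "u < N" "v < N"
  shows "cyc_w N u v = (if v \<in> {Suc u mod N, if u = 0 then N - 1 else u - 1} then 1 else 0)"
  using assms unfolding cyc_w_def by (cases "Suc u = N"; cases "Suc v = N"; cases "u = 0") auto

lemma cyc_deg_eq: assumes "N \<ge> 3" "u < N" shows "cyc_deg N u = 2"
proof -
  define pred where "pred = (if u = 0 then N - 1 else u - 1)"
  have "cyc_deg N u = (\<Sum>v\<in>{..<N}. if v \<in> {Suc u mod N, pred} then 1 else 0)"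
    unfolding cyc_deg_def cyc_V_def pred_def by (intro sum.cong) (simp_all add: cyc_w_eq assms)
  also have "\<dots> = real (card ({..<N} \<inter> {Suc u mod N, pred}))"
    by (simp add: sum.If_cases Int_def)
  also have "{..<N} \<inter> {Suc u mod N, pred} = {Suc u mod N, pred}"
    using assms unfolding pred_def by auto
  also have "card {Suc u mod N, pred} = 2"
    using assms unfolding pred_def by (cases "Suc u = N") auto
  finally show ?thesis by simp
qed

lemma cyc_vol_eq: "N \<ge> 3 \<Longrightarrow> S \<subseteq> cyc_V N \<Longrightarrow> cyc_vol N S = 2 * real (card S)"
  unfolding cyc_vol_def cyc_V_def by (subst sum.cong[OF refl, of _ _ "\<lambda>_. 2"]) (auto simp: cyc_deg_eq)

lemma cyc_vol_split:
  assumes "S \<subseteq> cyc_V N"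
  shows "cyc_vol N S = cyc_E N S S + cyc_E N S (cyc_V N - S)"
proof -
  have "cyc_vol N S = cyc_E N S (S \<union> (cyc_V N - S))"
    unfolding cyc_vol_def cyc_deg_def cyc_E_def using assms by (simp add: Un_absorb1)
  also have "\<dots> = cyc_E N S S + cyc_E N S (cyc_V N - S)"
    using assms by (intro cyc_E_Un_right) (auto simp: cyc_V_def finite_subset)
  finally show ?thesis .
qed

text \<open>\<open>N \<ge> 3\<close> makes the forward pairs \<open>(j, j+1)\<close> and backward pairs \<open>(j+1, j)\<close> disjoint,
  so each successor edge is counted twice; on a 2-cycle they coincide.\<close>
lemma succ_edges_le_sum_w:
  assumes N: "N \<ge> 3" and fin: "finite X" "finite Y" and J: "J \<subseteq> {..<N}"
    and edges: "\<forall>j\<in>J. (j \<in> X \<and> Suc j mod N \<in> Y) \<or> (j \<in> Y \<and> Suc j mod N \<in> X)"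
  shows "2 * real (card J) \<le> (\<Sum>(u, v)\<in>X \<times> Y \<union> Y \<times> X. cyc_w N u v)"
proof -
  define fwd where "fwd = (\<lambda>j. (j, Suc j mod N)) ` J"
  define bwd where "bwd = (\<lambda>j. (Suc j mod N, j)) ` J"
  have "finite J" using J finite_subset by blast
  moreover have "fwd \<inter> bwd = {}"
  proof -
    have "Suc (Suc j mod N) mod N \<noteq> j" if "j < N" for j
      using that N by (cases "Suc j = N"; cases "Suc (Suc j) = N") (auto simp: Suc_mod_eq)
    then show ?thesis using J by (auto simp: fwd_def bwd_def)
  qed
  ultimately have "card (fwd \<union> bwd) = 2 * card J"
    by (simp add: card_Un_disjoint fwd_def bwd_def card_image inj_on_def)
  moreover have "cyc_w N u v = 1" if "(u, v) \<in> fwd \<union> bwd" for u v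
    using that J N cyc_w_succ cyc_w_sym by (auto simp: fwd_def bwd_def)
  then have "real (card (fwd \<union> bwd)) = (\<Sum>(u, v)\<in>fwd \<union> bwd. cyc_w N u v)"
    by (simp add: case_prod_beta)
  moreover have "fwd \<union> bwd \<subseteq> X \<times> Y \<union> Y \<times> X"
    using edges by (auto simp: fwd_def bwd_def)
  then have "(\<Sum>(u, v)\<in>fwd \<union> bwd. cyc_w N u v) \<le> (\<Sum>(u, v)\<in>X \<times> Y \<union> Y \<times> X. cyc_w N u v)"
    using fin by (intro sum_mono2) (auto simp: cyc_w_nonneg)
  ultimately show ?thesis by simp
qed

lemma cyc_E_eq_sum_pairs: "finite X \<Longrightarrow> finite Y \<Longrightarrow> cyc_E N X Y = (\<Sum>(u, v)\<in>X \<times> Y. cyc_w N u v)"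
  unfolding cyc_E_def by (simp add: sum.cartesian_product)

lemma cyc_E_ge_succ_edges_between:
  assumes N: "N \<ge> 3" and fin: "finite X" "finite Y" and J: "J \<subseteq> {..<N}"
    and edges: "\<forall>j\<in>J. (j \<in> X \<and> Suc j mod N \<in> Y) \<or> (j \<in> Y \<and> Suc j mod N \<in> X)"
  shows "2 * real (card J) \<le> cyc_E N X Y + cyc_E N Y X"
proof -
  have "0 \<le> (\<Sum>(u, v)\<in>X \<times> Y \<inter> Y \<times> X. cyc_w N u v)"
    by (intro sum_nonneg) (auto simp: cyc_w_nonneg)
  then have "(\<Sum>(u, v)\<in>X \<times> Y \<union> Y \<times> X. cyc_w N u v) \<le> cyc_E N X Y + cyc_E N Y X"
    using fin sum.union_inter[of "X \<times> Y" "Y \<times> X" "\<lambda>(u, v). cyc_w N u v"]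
    by (simp add: cyc_E_eq_sum_pairs)
  then show ?thesis using succ_edges_le_sum_w[OF assms] by linarith
qed

lemma cyc_E_ge_succ_edges_within:
  assumes N: "N \<ge> 3" and fin: "finite X" and J: "J \<subseteq> {..<N}"
    and edges: "\<forall>j\<in>J. j \<in> X \<and> Suc j mod N \<in> X"
  shows "2 * real (card J) \<le> cyc_E N X X"
  using succ_edges_le_sum_w[OF N fin fin J] edges by (simp add: cyc_E_eq_sum_pairs[OF fin fin])

lemma succ_closed_contains_all:
  assumes "x \<in> X" "x < N" "\<forall>u\<in>X. Suc u mod N \<in> X" "v < N"
  shows "v \<in> X"
proof -
  have "(x + j) mod N \<in> X" for j
  proof (induction j)
    case 0
    then show ?case using assms by simp
  next
    case (Suc j)
    then show ?case using assms(3) by (metis add_Suc_right mod_Suc_eq)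
  qed
  from this[of "v + N - x"] show ?thesis using assms(2,4) by simp
qed

lemma cyc_boundary_ge_2:
  assumes N: "N \<ge> 3" and U: "U \<subseteq> cyc_V N" "U \<noteq> {}" "U \<noteq> cyc_V N"
  shows "cyc_E N U (cyc_V N - U) \<ge> 2"
proof -
  have exit: "\<exists>u\<in>X. Suc u mod N \<notin> X" if "X \<subseteq> {..<N}" "X \<noteq> {}" "X \<noteq> {..<N}" for X
    using that succ_closed_contains_all[of _ X N] by blast
  obtain u where u: "u \<in> U" "Suc u mod N \<notin> U"
    using exit[of U] U by (auto simp: cyc_V_def)
  obtain v where v: "v \<in> cyc_V N - U" "Suc v mod N \<notin> cyc_V N - U"
    using exit[of "{..<N} - U"] U by (auto simp: cyc_V_def)
  have "u \<noteq> v" using u v by auto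
  then have "2 * real (card {u, v}) = 4" by simp
  moreover have "2 * real (card {u, v}) \<le> cyc_E N U (cyc_V N - U) + cyc_E N (cyc_V N - U) U"
    using U u v by (intro cyc_E_ge_succ_edges_between[OF N]) (auto simp: cyc_V_def finite_subset)
  ultimately show ?thesis by (simp add: cyc_E_commute[of N "cyc_V N - U"])
qed

lemma odd_cycle_monochromatic_edge:
  assumes N: "odd N" and AB: "A \<union> B = {..<N}" "A \<inter> B = {}"
  shows "\<exists>j<N. (j \<in> A \<and> Suc j mod N \<in> A) \<or> (j \<in> B \<and> Suc j mod N \<in> B)"
proof (rule ccontr)
  assume "\<not> ?thesis"
  then have alternate: "Suc j mod N \<in> A \<longleftrightarrow> j \<notin> A" if "j < N" for j
    using that AB N by (metis UnE lessThan_iff mod_less_divisor odd_pos disjoint_iff)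
  have "j < N \<Longrightarrow> j \<in> A \<longleftrightarrow> (0 \<in> A \<longleftrightarrow> even j)" for j
  proof (induction j)
    case (Suc j)
    then show ?case using alternate[of j] by simp
  qed simp
  from this[of "N - 1"] have "N - 1 \<in> A \<longleftrightarrow> 0 \<in> A" using N by (simp add: odd_pos)
  moreover have "Suc (N - 1) mod N = 0" using N by (simp add: odd_pos)
  ultimately show False using alternate[of "N - 1"] N by (simp add: odd_pos)
qed

lemma cyc_phi_ge_inverse_card:
  assumes N: "N \<ge> 3" and S: "S \<subseteq> cyc_V N" "S \<noteq> {}" "S \<noteq> cyc_V N"
  shows "cyc_phi N S \<ge> 1 / real (card S)"
proof -
  have "card S > 0" using S by (auto simp: cyc_V_def card_gt_0_iff finite_subset)
  then show ?thesis
    using cyc_boundary_ge_2[OF assms] unfolding cyc_phi_def cyc_vol_eq[OF N S(1)]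
    by (simp add: field_simps)
qed

lemma cyc_phibar_eq:
  assumes N: "N \<ge> 3" and AB: "A \<subseteq> cyc_V N" "B \<subseteq> cyc_V N" "A \<inter> B = {}" "A \<union> B \<noteq> {}"
  shows "cyc_phibar N A B = 1 - (cyc_E N A A + cyc_E N B B + cyc_E N (A \<union> B) (cyc_V N - (A \<union> B)))
                                  / (2 * real (card (A \<union> B)))"
proof -
  have fin: "finite A" "finite B" using AB by (auto simp: cyc_V_def finite_subset)
  have vol: "cyc_vol N (A \<union> B) = 2 * real (card (A \<union> B))"
    using AB by (intro cyc_vol_eq[OF N]) auto
  have "card (A \<union> B) > 0" using AB fin by (simp add: card_gt_0_iff)
  moreover have "2 * real (card (A \<union> B)) = cyc_E N A A + cyc_E N B B + 2 * cyc_E N A B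
                                             + cyc_E N (A \<union> B) (cyc_V N - (A \<union> B))"
    using cyc_vol_split[of "A \<union> B" N] vol AB fin
    by (simp add: cyc_E_Un_left cyc_E_Un_right cyc_E_commute[of N B A])
  ultimately show ?thesis
    unfolding cyc_phibar_def vol by (simp add: field_simps)
qed

lemma cyc_phibar_le_1:
  assumes "N \<ge> 3" "A \<subseteq> cyc_V N" "B \<subseteq> cyc_V N" "A \<inter> B = {}" "A \<union> B \<noteq> {}"
  shows "cyc_phibar N A B \<le> 1"
  unfolding cyc_phibar_eq[OF assms] by (simp add: cyc_E_nonneg)

lemma cyc_phibar_le_one_minus_inverse_card:
  assumes N: "N \<ge> 3" and AB: "A \<subseteq> cyc_V N" "B \<subseteq> cyc_V N" "A \<inter> B = {}" "A \<union> B \<noteq> {}"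
    and "A \<union> B \<noteq> cyc_V N \<or> odd N"
  shows "cyc_phibar N A B \<le> 1 - 1 / real (card (A \<union> B))"
proof -
  have fin: "finite A" "finite B" using AB by (auto simp: cyc_V_def finite_subset)
  have "cyc_E N A A + cyc_E N B B + cyc_E N (A \<union> B) (cyc_V N - (A \<union> B)) \<ge> 2" (is "?D \<ge> 2")
  proof (cases "A \<union> B = cyc_V N")
    case True
    with assms odd_cycle_monochromatic_edge[of N A B]
    obtain j where j: "j < N" "(j \<in> A \<and> Suc j mod N \<in> A) \<or> (j \<in> B \<and> Suc j mod N \<in> B)"
      by (auto simp: cyc_V_def)
    then have "2 \<le> cyc_E N A A \<or> 2 \<le> cyc_E N B B"
      using cyc_E_ge_succ_edges_within[OF N fin(1), of "{j}"]
        cyc_E_ge_succ_edges_within[OF N fin(2), of "{j}"] by auto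
    then show ?thesis using cyc_E_nonneg[of N] by (meson add_increasing add_increasing2 order_trans)
  next
    case False
    then have "2 \<le> cyc_E N (A \<union> B) (cyc_V N - (A \<union> B))"
      using AB by (intro cyc_boundary_ge_2[OF N]) auto
    then show ?thesis using cyc_E_nonneg[of N] by (meson add_increasing order_trans)
  qed
  then have "2 / (2 * real (card (A \<union> B))) \<le> ?D / (2 * real (card (A \<union> B)))"
    by (intro divide_right_mono) auto
  then show ?thesis unfolding cyc_phibar_eq[OF N AB] by simp
qed

lemma cyc_phi_arc_le:
  assumes N: "N \<ge> 3" and m: "m \<ge> 1" "a + m \<le> N"
  shows "cyc_phi N {a..<a + m} \<le> 1 / real m"
proof -
  have sub: "{a..<a + m} \<subseteq> cyc_V N" using m by (auto simp: cyc_V_def)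
  have "2 * real (card {a..<a + m - 1}) \<le> cyc_E N {a..<a + m} {a..<a + m}"
    using m by (intro cyc_E_ge_succ_edges_within[OF N]) auto
  then have "cyc_E N {a..<a + m} (cyc_V N - {a..<a + m}) \<le> 2"
    using cyc_vol_split[OF sub] cyc_vol_eq[OF N sub] m by (simp add: of_nat_diff)
  then have "cyc_E N {a..<a + m} (cyc_V N - {a..<a + m}) / (2 * real m) \<le> 2 / (2 * real m)"
    by (intro divide_right_mono) auto
  then show ?thesis unfolding cyc_phi_def cyc_vol_eq[OF N sub] by simp
qed

lemma cyc_phibar_alternating_arc_ge:
  assumes N: "N \<ge> 3" and m: "m \<ge> 1" "a + m \<le> N"
  shows "cyc_phibar N {j\<in>{a..<a + m}. even j} {j\<in>{a..<a + m}. odd j} \<ge> 1 - 1 / real m"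
    (is "cyc_phibar N ?A ?B \<ge> _")
proof -
  have U: "?A \<union> ?B = {a..<a + m}" by auto
  have "2 * real (card {a..<a + m - 1}) \<le> cyc_E N ?A ?B + cyc_E N ?B ?A"
    using m by (intro cyc_E_ge_succ_edges_between[OF N]) auto
  then have "2 * (real m - 1) \<le> 2 * cyc_E N ?A ?B"
    using m cyc_E_commute[of N ?B ?A] by (simp add: of_nat_diff)
  then have "2 * (real m - 1) / (2 * real m) \<le> 2 * cyc_E N ?A ?B / (2 * real m)"
    by (intro divide_right_mono) auto
  moreover have "cyc_vol N (?A \<union> ?B) = 2 * real m"
    unfolding U using m by (subst cyc_vol_eq[OF N]) (auto simp: cyc_V_def)
  ultimately show ?thesis using m unfolding cyc_phibar_def by (simp add: field_simps)
qed

lemma cyc_phibar_alternating_even_cycle: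
  assumes N: "N \<ge> 3" "even N"
  shows "cyc_phibar N {j\<in>{..<N}. even j} {j\<in>{..<N}. odd j} \<ge> 1"
    (is "cyc_phibar N ?A ?B \<ge> _")
proof -
  have "2 * real (card {..<N}) \<le> cyc_E N ?A ?B + cyc_E N ?B ?A"
    using N by (intro cyc_E_ge_succ_edges_between) (auto simp: Suc_mod_eq)
  moreover have "?A \<union> ?B = cyc_V N" by (auto simp: cyc_V_def)
  then have "cyc_vol N (?A \<union> ?B) = 2 * real N" by (simp add: cyc_vol_eq[OF N(1)] cyc_V_def)
  ultimately show ?thesis
    using N cyc_E_commute[of N ?B ?A] unfolding cyc_phibar_def by simp
qed

lemma Inf_setcompr_eqI:
  fixes f :: "'a \<Rightarrow> 'b::conditionally_complete_linorder"
  assumes "P a" "f a = v" "\<And>x. P x \<Longrightarrow> v \<le> f x"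
  shows "Inf {f x | x. P x} = v"
  using assms by (intro cInf_eq_minimum) auto

lemma Sup_setcompr2_eqI:
  fixes f :: "'a \<Rightarrow> 'b \<Rightarrow> 'c::conditionally_complete_linorder"
  assumes "P a b" "f a b = v" "\<And>x y. P x y \<Longrightarrow> f x y \<le> v"
  shows "Sup {f x y | x y. P x y} = v"
  using assms by (intro cSup_eq_maximum) auto

lemma Max_image_lessThan_const: "0 < k \<Longrightarrow> (\<And>i. i < k \<Longrightarrow> f i = c) \<Longrightarrow> Max (f ` {..<k}) = c"
  by (subgoal_tac "f ` {..<k} = {c}") force+

lemma Min_image_lessThan_const: "0 < k \<Longrightarrow> (\<And>i. i < k \<Longrightarrow> f i = c) \<Longrightarrow> Min (f ` {..<k}) = c"
  by (subgoal_tac "f ` {..<k} = {c}") force+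

lemma disjoint_family_has_small_proper_member:
  assumes k: "2 \<le> k" and N: "0 < N" and S: "\<forall>i<k. S i \<subseteq> cyc_V N"
    and disj: "\<forall>i<k. \<forall>j<k. i \<noteq> j \<longrightarrow> S i \<inter> S j = {}"
  shows "\<exists>i<k. card (S i) \<le> N div k \<and> S i \<noteq> cyc_V N"
proof -
  have "\<exists>i<k. card (S i) \<le> N div k"
  proof (rule ccontr)
    assume "\<not> ?thesis"
    then have "k * (N div k + 1) \<le> (\<Sum>i<k. card (S i))"
      using sum_mono[of "{..<k}" "\<lambda>_. N div k + 1" "\<lambda>i. card (S i)"] by (simp add: not_le Suc_le_eq)
    also have "\<dots> = card (\<Union>i<k. S i)"
      using S disj by (intro card_UN_disjoint[symmetric]) (auto simp: cyc_V_def finite_subset)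
    also have "\<dots> \<le> N"
      using S card_mono[of "{..<N}" "\<Union>i<k. S i"] by (auto simp: cyc_V_def)
    moreover have "N < k * (N div k) + k"
      using k mult_div_mod_eq[of k N] mod_less_divisor[of k N] by linarith
    ultimately show False by (simp add: algebra_simps)
  qed
  moreover have "N div k < card (cyc_V N)" using k N by (simp add: cyc_V_def)
  ultimately show ?thesis by fastforce
qed

lemma equal_arcs_fit:
  fixes k N i :: nat
  assumes "2 \<le> k" "k \<le> N"
  shows "1 \<le> N div k" "N div k < N" "i < k \<Longrightarrow> i * (N div k) + N div k \<le> N"
proof -
  show "1 \<le> N div k" using assms div_le_mono[of k N k] by simp
  show "N div k < N" using assms by simp
  assume "i < k"
  then have "i * (N div k) + N div k \<le> k * (N div k)" by (metis Suc_leI add.commute mult_Suc mult_le_mono1)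
  also have "\<dots> \<le> N" by simp
  finally show "i * (N div k) + N div k \<le> N" .
qed

lemma arcs_disjoint:
  fixes m :: nat
  assumes "i \<noteq> j" shows "{i * m..<i * m + m} \<inter> {j * m..<j * m + m} = {}"
proof -
  have below: "i * m + m \<le> j * m" if "i < j" for i j
    using that by (metis Suc_leI add.commute mult_Suc mult_le_mono1)
  from assms consider "i < j" | "j < i" by linarith
  then show ?thesis using below[of i j] below[of j i] by cases auto
qed

lemma cyc_h_1: assumes N: "N \<ge> 3" shows "cyc_h N 1 = 0"
  unfolding cyc_h_def
proof (rule Inf_setcompr_eqI[where a = "\<lambda>_. cyc_V N"])
  show "Max ((\<lambda>i. cyc_phi N ((\<lambda>_. cyc_V N) i)) ` {..<1::nat}) = 0"
    by (simp add: lessThan_Suc cyc_phi_def cyc_E_def)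
  show "0 \<le> Max ((\<lambda>i. cyc_phi N (S i)) ` {..<1::nat})" for S
    by (simp add: lessThan_Suc cyc_phi_nonneg)
qed (use N in \<open>auto simp: cyc_V_def lessThan_empty_iff\<close>)

lemma cyc_hbar_1:
  assumes N: "N \<ge> 3"
  shows "cyc_hbar N 1 = (if odd N then 1 - 1 / real N else 1)"
proof -
  define A where "A = {j\<in>{..<N}. even j}"
  define B where "B = {j\<in>{..<N}. odd j}"
  have AB: "A \<subseteq> cyc_V N" "B \<subseteq> cyc_V N" "A \<inter> B = {}" "A \<union> B = cyc_V N"
    by (auto simp: A_def B_def cyc_V_def)
  have "A \<union> B \<noteq> {}" using AB(4) N by (simp add: cyc_V_def lessThan_empty_iff)
  note AB = AB this
  show ?thesis
    unfolding cyc_hbar_def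
  proof (rule Sup_setcompr2_eqI[where a = "\<lambda>_. A" and b = "\<lambda>_. B"])
    have "cyc_phibar N A B \<ge> (if odd N then 1 - 1 / real N else 1)"
      using cyc_phibar_alternating_arc_ge[OF N, of N 0] cyc_phibar_alternating_even_cycle[OF N] N
      unfolding A_def B_def by (auto simp: atLeast0LessThan)
    moreover have "cyc_phibar N A B \<le> (if odd N then 1 - 1 / real N else 1)"
      using cyc_phibar_le_one_minus_inverse_card[OF N AB(1-3,5)] cyc_phibar_le_1[OF N AB(1-3,5)] AB(4)
      by (simp add: cyc_V_def)
    ultimately show "Min ((\<lambda>i. cyc_phibar N ((\<lambda>_. A) i) ((\<lambda>_. B) i)) ` {..<1::nat})
                     = (if odd N then 1 - 1 / real N else 1)"
      by (simp add: lessThan_Suc)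
  next
    fix A' B' :: "nat \<Rightarrow> nat set"
    assume "(\<forall>i<1. A' i \<subseteq> cyc_V N \<and> B' i \<subseteq> cyc_V N \<and> A' i \<union> B' i \<noteq> {} \<and> A' i \<inter> B' i = {})
      \<and> (\<forall>i<1. \<forall>j<1. i \<noteq> j \<longrightarrow> (A' i \<union> B' i) \<inter> (A' j \<union> B' j) = {})"
    then have AB': "A' 0 \<subseteq> cyc_V N" "B' 0 \<subseteq> cyc_V N" "A' 0 \<inter> B' 0 = {}" "A' 0 \<union> B' 0 \<noteq> {}"
      by auto
    have "card (A' 0 \<union> B' 0) \<le> N"
      using AB' card_mono[of "cyc_V N" "A' 0 \<union> B' 0"] by (simp add: cyc_V_def)
    moreover have "card (A' 0 \<union> B' 0) > 0"
      using AB' by (auto simp: cyc_V_def card_gt_0_iff finite_subset)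
    ultimately have "1 - 1 / real (card (A' 0 \<union> B' 0)) \<le> 1 - 1 / real N"
      by (simp add: frac_le)
    then have "cyc_phibar N (A' 0) (B' 0) \<le> (if odd N then 1 - 1 / real N else 1)"
      using cyc_phibar_le_one_minus_inverse_card[OF N AB'] cyc_phibar_le_1[OF N AB'] by auto
    then show "Min ((\<lambda>i. cyc_phibar N (A' i) (B' i)) ` {..<1::nat}) \<le> (if odd N then 1 - 1 / real N else 1)"
      by (simp add: lessThan_Suc)
  qed (use AB(1-3,5) in simp)
qed

lemma cyc_h_eq:
  assumes N: "N \<ge> 3" and k: "2 \<le> k" "k \<le> N"
  shows "cyc_h N k = 1 / real (N div k)"
proof -
  define m where "m = N div k"
  define arc where "arc i = {i * m..<i * m + m}" for i
  have m: "1 \<le> m" "m < N" and fits: "\<And>i. i < k \<Longrightarrow> i * m + m \<le> N"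
    using equal_arcs_fit[OF k] unfolding m_def by auto
  have arc_sub: "arc i \<subseteq> cyc_V N" if "i < k" for i
    using fits[OF that] by (auto simp: arc_def cyc_V_def)
  have phi_arc: "cyc_phi N (arc i) = 1 / real m" if "i < k" for i
  proof (rule antisym)
    show "cyc_phi N (arc i) \<le> 1 / real m"
      unfolding arc_def using cyc_phi_arc_le[OF N m(1) fits[OF that]] .
    have card: "card (arc i) = m" by (simp add: arc_def)
    moreover have "arc i \<noteq> {}" using m(1) by (simp add: arc_def)
    moreover have "arc i \<noteq> cyc_V N" using card m(2) by (metis card_lessThan cyc_V_def less_irrefl)
    ultimately show "cyc_phi N (arc i) \<ge> 1 / real m"
      using cyc_phi_ge_inverse_card[OF N arc_sub[OF that]] by simp
  qed
  show ?thesis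
    unfolding cyc_h_def
  proof (rule Inf_setcompr_eqI[where a = arc])
    show "Max ((\<lambda>i. cyc_phi N (arc i)) ` {..<k}) = 1 / real (N div k)"
      using k phi_arc by (intro Max_image_lessThan_const) (auto simp: m_def)
    show "(\<forall>i<k. arc i \<noteq> {} \<and> arc i \<subseteq> cyc_V N) \<and> (\<forall>i<k. \<forall>j<k. i \<noteq> j \<longrightarrow> arc i \<inter> arc j = {})"
      using m(1) arc_sub arcs_disjoint[of _ _ m] unfolding arc_def by simp
  next
    fix S
    assume "(\<forall>i<k. S i \<noteq> {} \<and> S i \<subseteq> cyc_V N) \<and> (\<forall>i<k. \<forall>j<k. i \<noteq> j \<longrightarrow> S i \<inter> S j = {})"
    then obtain i where S: "i < k" "S i \<noteq> {}" "S i \<subseteq> cyc_V N" "S i \<noteq> cyc_V N"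
      and small: "card (S i) \<le> N div k"
      using disjoint_family_has_small_proper_member[OF k(1), of N S] N by auto
    have "card (S i) > 0" using S by (auto simp: cyc_V_def card_gt_0_iff finite_subset)
    then have "1 / real (N div k) \<le> 1 / real (card (S i))"
      using small by (intro divide_left_mono) auto
    also have "\<dots> \<le> cyc_phi N (S i)" using cyc_phi_ge_inverse_card[OF N S(3,2,4)] .
    also have "\<dots> \<le> Max ((\<lambda>i. cyc_phi N (S i)) ` {..<k})" using S(1) by (intro Max_ge) auto
    finally show "1 / real (N div k) \<le> Max ((\<lambda>i. cyc_phi N (S i)) ` {..<k})" .
  qed
qed

lemma cyc_hbar_eq:
  assumes N: "N \<ge> 3" and k: "2 \<le> k" "k \<le> N"
  shows "cyc_hbar N k = 1 - 1 / real (N div k)"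
proof -
  define m where "m = N div k"
  define arc where "arc i = {i * m..<i * m + m}" for i
  define A where "A i = {j\<in>arc i. even j}" for i
  define B where "B i = {j\<in>arc i. odd j}" for i
  have m: "1 \<le> m" "m < N" and fits: "\<And>i. i < k \<Longrightarrow> i * m + m \<le> N"
    using equal_arcs_fit[OF k] unfolding m_def by auto
  have AB_arc: "A i \<union> B i = arc i" "A i \<inter> B i = {}" for i by (auto simp: A_def B_def)
  have arc_sub: "arc i \<subseteq> cyc_V N" if "i < k" for i
    using fits[OF that] by (auto simp: arc_def cyc_V_def)
  have AB_sub: "A i \<subseteq> cyc_V N" "B i \<subseteq> cyc_V N" if "i < k" for i
    using arc_sub[OF that] AB_arc(1)[of i] by blast+
  have arc_ne: "arc i \<noteq> {}" for i using m(1) by (simp add: arc_def)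
  have card: "card (arc i) = m" for i by (simp add: arc_def)
  have phibar_arc: "cyc_phibar N (A i) (B i) = 1 - 1 / real m" if "i < k" for i
  proof (rule antisym)
    show "cyc_phibar N (A i) (B i) \<ge> 1 - 1 / real m"
      unfolding A_def B_def arc_def using cyc_phibar_alternating_arc_ge[OF N m(1) fits[OF that]] .
    have "arc i \<noteq> cyc_V N" using card m(2) by (metis card_lessThan cyc_V_def less_irrefl)
    then show "cyc_phibar N (A i) (B i) \<le> 1 - 1 / real m"
      using cyc_phibar_le_one_minus_inverse_card[OF N AB_sub[OF that]] arc_ne
      by (simp add: AB_arc card)
  qed
  show ?thesis
    unfolding cyc_hbar_def
  proof (rule Sup_setcompr2_eqI[where a = A and b = B])
    show "Min ((\<lambda>i. cyc_phibar N (A i) (B i)) ` {..<k}) = 1 - 1 / real (N div k)"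
      using k phibar_arc by (intro Min_image_lessThan_const) (auto simp: m_def)
    show "(\<forall>i<k. A i \<subseteq> cyc_V N \<and> B i \<subseteq> cyc_V N \<and> A i \<union> B i \<noteq> {} \<and> A i \<inter> B i = {})
      \<and> (\<forall>i<k. \<forall>j<k. i \<noteq> j \<longrightarrow> (A i \<union> B i) \<inter> (A j \<union> B j) = {})"
      using AB_sub arc_ne arcs_disjoint[of _ _ m] unfolding AB_arc arc_def by simp
  next
    fix A' B' :: "nat \<Rightarrow> nat set"
    assume AB': "(\<forall>i<k. A' i \<subseteq> cyc_V N \<and> B' i \<subseteq> cyc_V N \<and> A' i \<union> B' i \<noteq> {} \<and> A' i \<inter> B' i = {})
      \<and> (\<forall>i<k. \<forall>j<k. i \<noteq> j \<longrightarrow> (A' i \<union> B' i) \<inter> (A' j \<union> B' j) = {})"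
    then obtain i where i: "i < k" "A' i \<union> B' i \<noteq> cyc_V N" and small: "card (A' i \<union> B' i) \<le> N div k"
      using disjoint_family_has_small_proper_member[OF k(1), of N "\<lambda>i. A' i \<union> B' i"] N by auto
    have ABi: "A' i \<subseteq> cyc_V N" "B' i \<subseteq> cyc_V N" "A' i \<inter> B' i = {}" "A' i \<union> B' i \<noteq> {}"
      using AB' i(1) by auto
    then have "card (A' i \<union> B' i) > 0" by (auto simp: cyc_V_def card_gt_0_iff finite_subset)
    have "Min ((\<lambda>i. cyc_phibar N (A' i) (B' i)) ` {..<k}) \<le> cyc_phibar N (A' i) (B' i)"
      using i(1) by (intro Min_le) auto
    also have "\<dots> \<le> 1 - 1 / real (card (A' i \<union> B' i))"
      using cyc_phibar_le_one_minus_inverse_card[OF N ABi] i(2) by blast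
    also have "\<dots> \<le> 1 - 1 / real (N div k)"
      using small \<open>card (A' i \<union> B' i) > 0\<close> by (simp add: frac_le)
    finally show "Min ((\<lambda>i. cyc_phibar N (A' i) (B' i)) ` {..<k}) \<le> 1 - 1 / real (N div k)" .
  qed
qed

theorem proposition7p3:
  fixes N :: nat
  assumes "N \<ge> 3"
  shows "cyc_h N 1 = 0
    \<and> cyc_hbar N 1 = (if odd N then (real N - 1) / real N else 1)
    \<and> (\<forall>k. 2 \<le> k \<and> k \<le> N \<longrightarrow>
          cyc_h N k = 1 - cyc_hbar N k \<and> cyc_h N k = 1 / real (N div k))"
proof -
  have "1 - 1 / real N = (real N - 1) / real N" using assms by (simp add: field_simps)
  then show ?thesis using cyc_h_1 cyc_hbar_1 cyc_h_eq cyc_hbar_eq assms by simp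
qed

end
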